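(* Let $(X,\|\cdot\|_X)$ be a Banach space and $\mathcal{K}\subset X$. If there exists $\gamma>0$ such that $\lim_{n\to\infty}d_n^\gamma(\mathcal{K})_X=0$, then $\mathcal{K}$ is totally bounded (i.e. its closure is compact).
   Context: $\mathcal{K}$ is totally bounded if for every $\varepsilon>0$ it is covered by finitely many closed balls of radius $\varepsilon$. For $k\ge1$ and a norm $\|\cdot\|_{Y_k}$ on $\mathbb{R}^k$ let $B_{Y_k}=\{y\in\mathbb{R}^k:\|y\|_{Y_k}\le1\}$. For $\gamma\ge0$, the fixed Lipschitz width is $d^\gamma(\mathcal{K},Y_k)_X=\inf_{\Phi}\sup_{f\in\mathcal{K}}\inf_{y\in B_{Y_k}}\|f-\Phi(y)\|_X\in[0,\infty]$, the infimum being over all maps $\Phi:B_{Y_k}\to X$ with $\|\Phi(y)-\Phi(y')\|_X\le\gamma\|y-y'\|_{Y_k}$ for all $y,y'\in B_{Y_k}$. The Lipschitz width is $d_n^\gamma(\mathcal{K})_X=\inf_{1\le k\le n}\inf_{\|\cdot\|_{Y_k}}d^\gamma(\mathcal{K},Y_k)_X$, where the inner infimum is over all norms on $\mathbb{R}^k$. *)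

theory Defs
  imports "HOL-Analysis.Analysis" "HOL-Library.Extended_Nonnegative_Real"
begin

text \<open>R^k is represented by the real vectors indexed by nat that vanish outside {..<k}.\<close>
definition Rk :: "nat \<Rightarrow> (nat \<Rightarrow> real) set" where
  "Rk k = {y. \<forall>i\<ge>k. y i = 0}"

definition is_norm_on :: "nat \<Rightarrow> ((nat \<Rightarrow> real) \<Rightarrow> real) \<Rightarrow> bool" where
  "is_norm_on k N \<longleftrightarrow>
     (\<forall>y\<in>Rk k. N y \<ge> 0) \<and>
     (\<forall>y\<in>Rk k. N y = 0 \<longleftrightarrow> (\<forall>i. y i = 0)) \<and>
     (\<forall>y\<in>Rk k. \<forall>c::real. N (\<lambda>i. c * y i) = \<bar>c\<bar> * N y) \<and>
     (\<forall>y\<in>Rk k. \<forall>z\<in>Rk k. N (\<lambda>i. y i + z i) \<le> N y + N z)"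

definition unit_ball :: "nat \<Rightarrow> ((nat \<Rightarrow> real) \<Rightarrow> real) \<Rightarrow> (nat \<Rightarrow> real) set" where
  "unit_ball k N = {y \<in> Rk k. N y \<le> 1}"

definition lipschitz_on_ball ::
  "real \<Rightarrow> nat \<Rightarrow> ((nat \<Rightarrow> real) \<Rightarrow> real) \<Rightarrow> ((nat \<Rightarrow> real) \<Rightarrow> 'a::metric_space) \<Rightarrow> bool" where
  "lipschitz_on_ball \<gamma> k N \<Phi> \<longleftrightarrow>
     (\<forall>y\<in>unit_ball k N. \<forall>y'\<in>unit_ball k N. dist (\<Phi> y) (\<Phi> y') \<le> \<gamma> * N (\<lambda>i. y i - y' i))"

definition fixed_lipschitz_width ::
  "real \<Rightarrow> 'a::real_normed_vector set \<Rightarrow> nat \<Rightarrow> ((nat \<Rightarrow> real) \<Rightarrow> real) \<Rightarrow> ennreal" where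
  "fixed_lipschitz_width \<gamma> K k N =
     (INF \<Phi> \<in> {\<Phi>. lipschitz_on_ball \<gamma> k N \<Phi>}.
        SUP f \<in> K. INF y \<in> unit_ball k N. ennreal (norm (f - \<Phi> y)))"

definition lipschitz_width :: "real \<Rightarrow> 'a::real_normed_vector set \<Rightarrow> nat \<Rightarrow> ennreal" where
  "lipschitz_width \<gamma> K n =
     (INF k \<in> {1..n}. INF N \<in> {N. is_norm_on k N}. fixed_lipschitz_width \<gamma> K k N)"

end

theory Submission
  imports Defs
begin

(* A Lipschitz width below e provides a Lipschitz map from the closed unit ball of some norm
   on R^k whose image lies within e of every point of K.  Every norm on R^k dominates a
   multiple of each coordinate (its minimum on the coordinate sup-norm sphere is positive,
   by compactness), so that unit ball is compact, and so is its Lipschitz image.  A set lying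
   within every e > 0 of a compact set is totally bounded. *)

lemma Rk_diff: "y \<in> Rk k \<Longrightarrow> z \<in> Rk k \<Longrightarrow> (\<lambda>i. y i - z i) \<in> Rk k"
  by (simp add: Rk_def)

lemma Rk_scale: "y \<in> Rk k \<Longrightarrow> (\<lambda>i. c * y i) \<in> Rk k"
  by (simp add: Rk_def)

lemma Rk_sum: "(\<And>i. i \<in> I \<Longrightarrow> f i \<in> Rk k) \<Longrightarrow> (\<lambda>j. \<Sum>i\<in>I. f i j) \<in> Rk k"
  by (simp add: Rk_def)

lemma indicator_in_Rk: "i < k \<Longrightarrow> indicator {i} \<in> Rk k"
  by (simp add: Rk_def)

lemma norm_on_nonneg: "is_norm_on k N \<Longrightarrow> y \<in> Rk k \<Longrightarrow> 0 \<le> N y"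
  by (simp add: is_norm_on_def)

lemma norm_on_eq_0_iff: "is_norm_on k N \<Longrightarrow> y \<in> Rk k \<Longrightarrow> N y = 0 \<longleftrightarrow> (\<forall>i. y i = 0)"
  by (simp add: is_norm_on_def)

lemma norm_on_zero: "is_norm_on k N \<Longrightarrow> N (\<lambda>_. 0) = 0"
  by (simp add: is_norm_on_def Rk_def)

lemma norm_on_scale: "is_norm_on k N \<Longrightarrow> y \<in> Rk k \<Longrightarrow> N (\<lambda>i. c * y i) = \<bar>c\<bar> * N y"
  by (simp add: is_norm_on_def)

lemma norm_on_triangle:
  "is_norm_on k N \<Longrightarrow> y \<in> Rk k \<Longrightarrow> z \<in> Rk k \<Longrightarrow> N (\<lambda>i. y i + z i) \<le> N y + N z"
  by (simp add: is_norm_on_def)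

lemma norm_on_minus_commute:
  assumes N: "is_norm_on k N" and "y \<in> Rk k" "z \<in> Rk k"
  shows "N (\<lambda>i. y i - z i) = N (\<lambda>i. z i - y i)"
  using norm_on_scale[OF N Rk_diff[OF assms(2,3)], of "-1"] by simp

lemma norm_on_triangle_rev:
  assumes N: "is_norm_on k N" and y: "y \<in> Rk k" and z: "z \<in> Rk k"
  shows "\<bar>N y - N z\<bar> \<le> N (\<lambda>i. y i - z i)"
proof -
  have "N y \<le> N z + N (\<lambda>i. y i - z i)"
    using norm_on_triangle[OF N z Rk_diff[OF y z]] by simp
  moreover have "N z \<le> N y + N (\<lambda>i. z i - y i)"
    using norm_on_triangle[OF N y Rk_diff[OF z y]] by simp
  ultimately show ?thesis
    using norm_on_minus_commute[OF N y z] by linarith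
qed

lemma norm_on_sum_le:
  assumes N: "is_norm_on k N" and f: "\<And>i. i \<in> I \<Longrightarrow> f i \<in> Rk k"
  shows "N (\<lambda>j. \<Sum>i\<in>I. f i j) \<le> (\<Sum>i\<in>I. N (f i))"
  using f
proof (induction I rule: infinite_finite_induct)
  case (insert a I)
  have "N (\<lambda>j. \<Sum>i\<in>insert a I. f i j) = N (\<lambda>j. f a j + (\<Sum>i\<in>I. f i j))"
    using insert.hyps by simp
  also have "\<dots> \<le> N (f a) + N (\<lambda>j. \<Sum>i\<in>I. f i j)"
    using norm_on_triangle[OF N _ Rk_sum, of "f a" I f] insert.prems by simp
  also have "\<dots> \<le> N (f a) + (\<Sum>i\<in>I. N (f i))"
    using insert.IH insert.prems by simp
  finally show ?case
    using insert.hyps by simp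
qed (simp_all add: norm_on_zero[OF N])

lemma norm_on_le_sum_coords:
  assumes N: "is_norm_on k N" and w: "w \<in> Rk k"
  shows "N w \<le> (\<Sum>i<k. \<bar>w i\<bar> * N (indicator {i}))"
proof -
  have "w j = (\<Sum>i<k. w i * indicator {i} j)" for j
    using w by (cases "j < k") (auto simp: Rk_def indicator_def)
  then have "w = (\<lambda>j. \<Sum>i<k. w i * indicator {i} j)"
    by blast
  then have "N w \<le> (\<Sum>i<k. N (\<lambda>j. w i * indicator {i} j))"
    using norm_on_sum_le[OF N, of "{..<k}" "\<lambda>i j. w i * indicator {i} j"]
    by (simp add: Rk_scale indicator_in_Rk)
  also have "\<dots> = (\<Sum>i<k. \<bar>w i\<bar> * N (indicator {i}))"
    by (simp add: norm_on_scale[OF N] indicator_in_Rk)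
  finally show ?thesis .
qed

lemma continuous_on_if_dist_le_norm_on:
  fixes g :: "(nat \<Rightarrow> real) \<Rightarrow> 'a::metric_space"
  assumes N: "is_norm_on k N" and S: "S \<subseteq> Rk k"
    and g: "\<And>y z. y \<in> S \<Longrightarrow> z \<in> S \<Longrightarrow> dist (g y) (g z) \<le> L * N (\<lambda>i. y i - z i)"
  shows "continuous_on S g"
  unfolding continuous_on_def
proof
  fix z assume z: "z \<in> S"
  define h where "h y = \<bar>L\<bar> * (\<Sum>i<k. \<bar>y i - z i\<bar> * N (indicator {i}))" for y :: "nat \<Rightarrow> real"
  have "continuous_on S h"
    unfolding h_def
    by (intro continuous_intros continuous_on_subset[OF continuous_on_product_coordinates]) simp
  then have "(h \<longlongrightarrow> h z) (at z within S)"
    using z by (simp add: continuous_on_def)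
  then have h_tendsto: "(h \<longlongrightarrow> 0) (at z within S)"
    by (simp add: h_def)
  have dist_le_h: "dist (g y) (g z) \<le> h y" if y: "y \<in> S" for y
  proof -
    have "dist (g y) (g z) \<le> \<bar>L\<bar> * N (\<lambda>i. y i - z i)"
      using g[OF y z] mult_right_mono[OF abs_ge_self norm_on_nonneg[OF N Rk_diff], of y z L]
        y z S by (meson order_trans subsetD)
    also have "\<dots> \<le> h y"
      unfolding h_def using norm_on_le_sum_coords[OF N Rk_diff, of y z] y z S
      by (meson abs_ge_zero mult_left_mono subsetD)
    finally show ?thesis .
  qed
  have "\<forall>\<^sub>F y in at z within S. norm (dist (g y) (g z)) \<le> h y"
    by (simp add: eventually_at_filter always_eventually dist_le_h)
  then have "((\<lambda>y. dist (g y) (g z)) \<longlongrightarrow> 0) (at z within S)"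
    using h_tendsto by (rule Lim_null_comparison)
  then show "(g \<longlongrightarrow> g z) (at z within S)"
    by (rule tendsto_dist_iff[THEN iffD2])
qed

lemma continuous_on_norm_on:
  assumes N: "is_norm_on k N"
  shows "continuous_on (Rk k) N"
  by (rule continuous_on_if_dist_le_norm_on[OF N order_refl, where L = 1])
    (simp add: dist_real_def norm_on_triangle_rev[OF N])

lemma continuous_on_lipschitz_on_ball:
  assumes N: "is_norm_on k N" and "lipschitz_on_ball \<gamma> k N \<Phi>"
  shows "continuous_on (unit_ball k N) \<Phi>"
  using assms unfolding lipschitz_on_ball_def
  by (intro continuous_on_if_dist_le_norm_on[OF N, where L = \<gamma>]) (auto simp: unit_ball_def)

definition coord_box :: "nat \<Rightarrow> real \<Rightarrow> (nat \<Rightarrow> real) set" where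
  "coord_box k R = (\<Pi>\<^sub>E i\<in>UNIV. if i < k then {-R..R} else {0})"

lemma compact_coord_box: "compact (coord_box k R)"
proof -
  have "compactin (product_topology (\<lambda>_. euclidean) UNIV) (coord_box k R)"
    unfolding coord_box_def compactin_PiE by auto
  then show ?thesis
    by (simp add: euclidean_product_topology)
qed

lemma mem_coord_box_iff: "y \<in> coord_box k R \<longleftrightarrow> y \<in> Rk k \<and> (\<forall>i<k. \<bar>y i\<bar> \<le> R)"
proof -
  have "y i \<in> (if i < k then {-R..R} else {0}) \<longleftrightarrow> (k \<le> i \<longrightarrow> y i = 0) \<and> (i < k \<longrightarrow> \<bar>y i\<bar> \<le> R)"
    for i
    by (auto simp: abs_le_iff)
  then show ?thesis
    by (auto simp: coord_box_def PiE_UNIV_domain Pi_iff Rk_def)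
qed

lemma norm_on_bounded_below_on_coord_sphere:
  assumes N: "is_norm_on k N"
  obtains c where "c > 0" "\<And>y i. y \<in> coord_box k 1 \<Longrightarrow> i < k \<Longrightarrow> \<bar>y i\<bar> = 1 \<Longrightarrow> c \<le> N y"
proof -
  define S where "S = coord_box k 1 \<inter> (\<Union>i<k. {y. \<bar>y i\<bar> = 1})"
  have "closed {y::nat \<Rightarrow> real. \<bar>y i\<bar> = 1}" for i
    by (intro closed_Collect_eq continuous_intros continuous_on_product_coordinates)
  then have "compact S"
    unfolding S_def by (intro compact_Int_closed compact_coord_box closed_UN) auto
  have S_Rk: "S \<subseteq> Rk k"
    by (auto simp: S_def mem_coord_box_iff)
  have "\<exists>c>0. \<forall>y\<in>S. c \<le> N y"
  proof (cases "S = {}")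
    case False
    moreover have "continuous_on S N"
      using continuous_on_subset[OF continuous_on_norm_on[OF N] S_Rk] .
    ultimately obtain y0 where y0: "y0 \<in> S" "\<forall>y\<in>S. N y0 \<le> N y"
      using continuous_attains_inf[OF \<open>compact S\<close>] by blast
    have "N y0 \<noteq> 0"
      using y0(1) S_Rk norm_on_eq_0_iff[OF N] by (fastforce simp: S_def)
    then have "N y0 > 0"
      using norm_on_nonneg[OF N] y0(1) S_Rk by (simp add: order_less_le subset_eq)
    then show ?thesis
      using y0(2) by blast
  qed (simp add: exI[of _ 1])
  then show ?thesis
    using that by (auto simp: S_def)
qed

lemma norm_on_ge_coord:
  assumes N: "is_norm_on k N"
  obtains c where "c > 0" "\<And>y i. y \<in> Rk k \<Longrightarrow> i < k \<Longrightarrow> c * \<bar>y i\<bar> \<le> N y"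
proof -
  obtain c where c: "c > 0" and c_le: "\<And>y i. y \<in> coord_box k 1 \<Longrightarrow> i < k \<Longrightarrow> \<bar>y i\<bar> = 1 \<Longrightarrow> c \<le> N y"
    using norm_on_bounded_below_on_coord_sphere[OF N] by blast
  have "c * \<bar>y i\<bar> \<le> N y" if y: "y \<in> Rk k" and i: "i < k" for y i
  proof -
    define m where "m = Max ((\<lambda>j. \<bar>y j\<bar>) ` {..<k})"
    have fin: "finite ((\<lambda>j. \<bar>y j\<bar>) ` {..<k})" "(\<lambda>j. \<bar>y j\<bar>) ` {..<k} \<noteq> {}"
      using i by auto
    have y_le_m: "\<bar>y j\<bar> \<le> m" if "j < k" for j
      unfolding m_def using fin that by (intro Max_ge) auto
    obtain j0 where j0: "j0 < k" "\<bar>y j0\<bar> = m"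
      using Max_in[OF fin] unfolding m_def by auto
    show ?thesis
    proof (cases "m = 0")
      case True
      then show ?thesis
        using y_le_m[OF i] norm_on_nonneg[OF N y] by simp
    next
      case False
      then have "m > 0"
        using j0 by auto
      define y' where "y' = (\<lambda>j. y j / m)"
      have "y' \<in> coord_box k 1"
        using y y_le_m \<open>m > 0\<close> by (auto simp: mem_coord_box_iff y'_def Rk_def)
      moreover have "\<bar>y' j0\<bar> = 1"
        using j0 \<open>m > 0\<close> by (simp add: y'_def)
      ultimately have "c \<le> N y'"
        using c_le j0(1) by blast
      also have "N y' = N y / m"
        using norm_on_scale[OF N y, of "1 / m"] \<open>m > 0\<close> by (simp add: y'_def)
      finally have "c * m \<le> N y"
        using \<open>m > 0\<close> by (simp add: field_simps)
      moreover have "c * \<bar>y i\<bar> \<le> c * m"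
        using y_le_m[OF i] c by simp
      ultimately show ?thesis
        by linarith
    qed
  qed
  with c that show ?thesis
    by blast
qed

lemma closed_Rk: "closed (Rk k)"
proof -
  have "Rk k = (\<Inter>i\<in>{k..}. {y. y i = 0})"
    by (auto simp: Rk_def)
  moreover have "closed {y::nat \<Rightarrow> real. y i = 0}" for i
    by (intro closed_Collect_eq continuous_on_product_coordinates continuous_on_const)
  ultimately show ?thesis
    by (simp add: closed_INT)
qed

lemma closed_unit_ball:
  assumes N: "is_norm_on k N"
  shows "closed (unit_ball k N)"
proof -
  have "unit_ball k N = Rk k \<inter> N -` {..1}"
    by (auto simp: unit_ball_def)
  then show ?thesis
    using continuous_closed_preimage[OF continuous_on_norm_on[OF N] closed_Rk closed_atMost] by simp
qed

lemma compact_unit_ball: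
  assumes N: "is_norm_on k N"
  shows "compact (unit_ball k N)"
proof -
  obtain c where c: "c > 0" "\<And>y i. y \<in> Rk k \<Longrightarrow> i < k \<Longrightarrow> c * \<bar>y i\<bar> \<le> N y"
    using norm_on_ge_coord[OF N] by blast
  have "\<bar>y i\<bar> \<le> 1 / c" if "y \<in> unit_ball k N" "i < k" for y i
    using c(2)[of y i] that c(1) by (auto simp: unit_ball_def field_simps)
  then have "unit_ball k N \<subseteq> coord_box k (1 / c)"
    by (auto simp: unit_ball_def mem_coord_box_iff)
  moreover have "compact (coord_box k (1 / c) \<inter> unit_ball k N)"
    by (intro compact_Int_closed compact_coord_box closed_unit_ball[OF N])
  ultimately show ?thesis
    by (simp add: Int_absorb1)
qed

lemma totally_bounded_if_near_compact:
  fixes K :: "'a::metric_space set"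
  assumes "\<And>e. e > 0 \<Longrightarrow> \<exists>C. compact C \<and> (\<forall>x\<in>K. \<exists>y\<in>C. dist x y < e)"
  shows "totally_bounded K"
  unfolding totally_bounded_metric
proof (intro allI impI)
  fix e :: real assume "e > 0"
  then obtain C where "compact C" and near: "\<forall>x\<in>K. \<exists>y\<in>C. dist x y < e / 2"
    using assms[of "e / 2"] by auto
  then obtain F where "finite F" and F: "C \<subseteq> (\<Union>z\<in>F. ball z (e / 2))"
    using \<open>e > 0\<close> unfolding compact_eq_totally_bounded by (meson half_gt_zero)
  have "\<exists>z\<in>F. dist z x < e" if "x \<in> K" for x
  proof -
    obtain y z where "y \<in> C" "dist x y < e / 2" "z \<in> F" "dist z y < e / 2"
      using near F \<open>x \<in> K\<close> by fastforce
    then show ?thesis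
      by (metis dist_commute dist_triangle_half_l)
  qed
  with \<open>finite F\<close> show "\<exists>F. finite F \<and> K \<subseteq> (\<Union>z\<in>F. {x. dist z x < e})"
    by blast
qed

lemma lipschitz_width_lessE:
  assumes "lipschitz_width \<gamma> K n < ennreal e"
  obtains k N \<Phi> where "is_norm_on k N" "lipschitz_on_ball \<gamma> k N \<Phi>"
    "\<And>f. f \<in> K \<Longrightarrow> \<exists>y\<in>unit_ball k N. norm (f - \<Phi> y) < e"
proof -
  obtain k N \<Phi> where N: "is_norm_on k N" and \<Phi>: "lipschitz_on_ball \<gamma> k N \<Phi>"
    and sup_less: "(SUP f\<in>K. INF y\<in>unit_ball k N. ennreal (norm (f - \<Phi> y))) < ennreal e"
    using assms unfolding lipschitz_width_def fixed_lipschitz_width_def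
    by (auto simp: INF_less_iff)
  have "\<exists>y\<in>unit_ball k N. norm (f - \<Phi> y) < e" if "f \<in> K" for f
  proof -
    have "(INF y\<in>unit_ball k N. ennreal (norm (f - \<Phi> y))) < ennreal e"
      using sup_less \<open>f \<in> K\<close> by (meson SUP_upper le_less_trans)
    then show ?thesis
      by (auto simp: INF_less_iff ennreal_less_iff)
  qed
  with N \<Phi> that show ?thesis
    by blast
qed

theorem lemma2p9:
  fixes K :: "'a::banach set"
  assumes "\<exists>\<gamma>>0. (\<lambda>n. lipschitz_width \<gamma> K n) \<longlonglongrightarrow> 0"
  shows "totally_bounded K"
proof (rule totally_bounded_if_near_compact)
  fix e :: real assume "e > 0"
  obtain \<gamma> where "(\<lambda>n. lipschitz_width \<gamma> K n) \<longlonglongrightarrow> 0"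
    using assms by blast
  then have "\<forall>\<^sub>F n in sequentially. lipschitz_width \<gamma> K n < ennreal e"
    using \<open>e > 0\<close> by (intro order_tendstoD(2)) auto
  then obtain n where "lipschitz_width \<gamma> K n < ennreal e"
    by (meson eventually_sequentially order_refl)
  then obtain k N \<Phi> where N: "is_norm_on k N" and \<Phi>: "lipschitz_on_ball \<gamma> k N \<Phi>"
    and near: "\<And>f. f \<in> K \<Longrightarrow> \<exists>y\<in>unit_ball k N. norm (f - \<Phi> y) < e"
    by (elim lipschitz_width_lessE) blast
  have "compact (\<Phi> ` unit_ball k N)"
    using compact_continuous_image[OF continuous_on_lipschitz_on_ball[OF N \<Phi>] compact_unit_ball[OF N]] .
  moreover have "\<forall>f\<in>K. \<exists>x\<in>\<Phi> ` unit_ball k N. dist f x < e"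
    using near by (fastforce simp: dist_norm)
  ultimately show "\<exists>C. compact C \<and> (\<forall>f\<in>K. \<exists>x\<in>C. dist f x < e)"
    by blast
qed

end
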